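(* For every integer $k\ge 1$, let $a^{(k)}_n=|S_n(123,\,213,\,1(k+1)k(k-1)\cdots 2)|$ for $n\ge 0$, with $a^{(k)}_0=1$ counting the empty permutation. Then $$\sum_{n\ge 0} a^{(k)}_n x^n=\frac{1-x}{1-2x+x^{k+1}}.$$ (In particular, for $k=3$ this equals $\frac{1}{1-x-x^2-x^3}$, the generating function of the Tribonacci numbers $1,1,2,4,7,13,24,\dots$.) *)

theory Defs
  imports Main "HOL-Computational_Algebra.Formal_Power_Series"
begin

text \<open>Permutations of [n] = {1..n} in one-line notation, as lists.
  For n = 0 this is the singleton set containing the empty permutation.\<close>
definition perms :: "nat \<Rightarrow> nat list set" where
  "perms n = {xs. distinct xs \<and> set xs = {1..n}}"

definition contains_pattern :: "nat list \<Rightarrow> nat list \<Rightarrow> bool" where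
  "contains_pattern \<sigma> \<tau> \<longleftrightarrow>
     (\<exists>is. length is = length \<tau> \<and> sorted_wrt (<) is \<and> (\<forall>i\<in>set is. i < length \<sigma>) \<and>
       (\<forall>j<length \<tau>. \<forall>l<length \<tau>. (\<sigma> ! (is ! j) < \<sigma> ! (is ! l)) \<longleftrightarrow> (\<tau> ! j < \<tau> ! l)))"

definition avoids :: "nat list \<Rightarrow> nat list set \<Rightarrow> bool" where
  "avoids \<sigma> P \<longleftrightarrow> (\<forall>\<tau>\<in>P. \<not> contains_pattern \<sigma> \<tau>)"

definition pat_k :: "nat \<Rightarrow> nat list" where
  "pat_k k = 1 # rev [2..<k+2]"

definition a_seq :: "nat \<Rightarrow> nat \<Rightarrow> nat" where
  "a_seq k n = card {\<sigma> \<in> perms n. avoids \<sigma> {[1,2,3], [2,1,3], pat_k k}}"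

end

theory Submission
  imports Defs
begin

text \<open>A permutation avoids 123 and 213 iff no entry is preceded by two smaller entries.
  If such a permutation of [n] starts with a, every entry larger than a has a in front of it,
  so all other entries in front of it are larger than it: the entries a+1, ..., n come right
  after a, in decreasing order, followed by a permutation of [a-1] with the same property.
  In a, n, n-1, ..., a+1, \<tau> an occurrence of 1 (k+1) k ... 2 either lies inside \<tau>, or its
  entry 1 lies in the prefix and its k larger entries lie in the decreasing run, which requires
  k \<le> n - a. Hence a(n) = a(n-1) + ... + a(n-k), with terms of negative index omitted, and
  the generating function is 1 / (1 - x - ... - x^k) = (1 - x) / (1 - 2x + x^(k+1)).\<close>

section \<open>Occurrences of patterns\<close>

definition occurs_at :: "nat list \<Rightarrow> nat list \<Rightarrow> nat list \<Rightarrow> bool" where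
  "occurs_at \<sigma> \<tau> is \<longleftrightarrow> length is = length \<tau> \<and> sorted_wrt (<) is \<and> (\<forall>i\<in>set is. i < length \<sigma>) \<and>
     (\<forall>j<length \<tau>. \<forall>l<length \<tau>. (\<sigma> ! (is ! j) < \<sigma> ! (is ! l)) \<longleftrightarrow> (\<tau> ! j < \<tau> ! l))"

lemma contains_pattern_iff_occurs_at: "contains_pattern \<sigma> \<tau> \<longleftrightarrow> (\<exists>is. occurs_at \<sigma> \<tau> is)"
  by (simp add: contains_pattern_def occurs_at_def)

lemma occurs_at_append_left:
  "occurs_at ys \<tau> is \<Longrightarrow> occurs_at (xs @ ys) \<tau> (map ((+) (length xs)) is)"
  by (auto simp: occurs_at_def sorted_wrt_map nth_append)

lemma occurs_at_append_leftD:
  assumes "occurs_at (xs @ ys) \<tau> is" and suffix: "\<forall>i\<in>set is. length xs \<le> i"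
  shows "occurs_at ys \<tau> (map (\<lambda>i. i - length xs) is)"
proof -
  from assms(1) have len: "length is = length \<tau>" and sorted: "sorted_wrt (<) is"
    and bound: "\<forall>i\<in>set is. i < length (xs @ ys)"
    and order: "\<forall>j<length \<tau>. \<forall>l<length \<tau>.
                  ((xs @ ys) ! (is ! j) < (xs @ ys) ! (is ! l)) \<longleftrightarrow> (\<tau> ! j < \<tau> ! l)"
    unfolding occurs_at_def by blast+
  have shift: "(xs @ ys) ! i = ys ! (i - length xs)" if "i \<in> set is" for i
    using bspec[OF suffix that] by (simp add: nth_append)
  have "sorted_wrt (\<lambda>i j. i - length xs < j - length xs) is"
    using sorted by (rule sorted_wrt_mono_rel[rotated]) (use suffix in auto)
  moreover have "\<forall>i\<in>set is. i - length xs < length ys"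
    using bound suffix by (simp add: less_diff_conv2 add.commute)
  moreover have "(ys ! (is ! j - length xs) < ys ! (is ! l - length xs)) \<longleftrightarrow> (\<tau> ! j < \<tau> ! l)"
    if "j < length \<tau>" "l < length \<tau>" for j l
    using order that shift[OF nth_mem] len by simp
  ultimately show ?thesis
    using len by (simp add: occurs_at_def sorted_wrt_map)
qed

lemma contains_pattern_append_left:
  "contains_pattern ys \<tau> \<Longrightarrow> contains_pattern (xs @ ys) \<tau>"
  by (meson contains_pattern_iff_occurs_at occurs_at_append_left)

lemma contains_pattern_length3_iff:
  "contains_pattern s [p0, p1, p2] \<longleftrightarrow>
     (\<exists>i j l. i < j \<and> j < l \<and> l < length s \<and>
        (s!i < s!j \<longleftrightarrow> p0 < p1) \<and> (s!j < s!i \<longleftrightarrow> p1 < p0) \<and>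
        (s!i < s!l \<longleftrightarrow> p0 < p2) \<and> (s!l < s!i \<longleftrightarrow> p2 < p0) \<and>
        (s!j < s!l \<longleftrightarrow> p1 < p2) \<and> (s!l < s!j \<longleftrightarrow> p2 < p1))"
  (is "_ \<longleftrightarrow> (\<exists>i j l. ?occ i j l)")
proof -
  have occ: "occurs_at s [p0, p1, p2] [i, j, l] \<longleftrightarrow> ?occ i j l" for i j l
    by (simp add: occurs_at_def All_less_Suc2) (use less_trans in blast)
  show ?thesis
  proof
    assume "contains_pattern s [p0, p1, p2]"
    then obtain "is" where "occurs_at s [p0, p1, p2] is"
      unfolding contains_pattern_iff_occurs_at by blast
    moreover from this obtain i j l where "is = [i, j, l]"
      unfolding occurs_at_def by (metis length_0_conv length_Suc_conv)
    ultimately have "?occ i j l"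
      using occ by simp
    then show "\<exists>i j l. ?occ i j l" by blast
  next
    assume "\<exists>i j l. ?occ i j l"
    then obtain i j l where "?occ i j l" by blast
    then have "occurs_at s [p0, p1, p2] [i, j, l]"
      using occ by simp
    then show "contains_pattern s [p0, p1, p2]"
      unfolding contains_pattern_iff_occurs_at by blast
  qed
qed

lemma sorted_wrt_less_nth_ge:
  assumes "sorted_wrt (<) xs" "j < length xs"
  shows "xs ! 0 + j \<le> xs ! j"
  using assms(2)
proof (induction j)
  case 0
  then show ?case by simp
next
  case (Suc j)
  then have "xs ! j < xs ! Suc j"
    using assms(1) by (simp add: sorted_wrt_nth_less)
  with Suc show ?case by simp
qed

section \<open>Avoiding 123 and 213\<close>

definition no_two_smaller_before :: "nat list \<Rightarrow> bool" where
  "no_two_smaller_before s \<longleftrightarrow>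
     (\<forall>i j l. i < j \<and> j < l \<and> l < length s \<longrightarrow> \<not> (s!i < s!l \<and> s!j < s!l))"

lemma no_two_smaller_before_iff_avoids_123_213:
  assumes "distinct s"
  shows "no_two_smaller_before s \<longleftrightarrow>
           \<not> contains_pattern s [1,2,3] \<and> \<not> contains_pattern s [2,1,3]"
proof
  assume "no_two_smaller_before s"
  then have "\<not> (s!i < s!l \<and> s!j < s!l)" if "i < j" "j < l" "l < length s" for i j l
    using that unfolding no_two_smaller_before_def by blast
  then show "\<not> contains_pattern s [1,2,3] \<and> \<not> contains_pattern s [2,1,3]"
    unfolding contains_pattern_length3_iff by simp (meson less_trans)
next
  assume avoids: "\<not> contains_pattern s [1,2,3] \<and> \<not> contains_pattern s [2,1,3]"
  show "no_two_smaller_before s"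
    unfolding no_two_smaller_before_def
  proof (intro allI impI notI)
    fix i j l
    assume ijl: "i < j \<and> j < l \<and> l < length s" and smaller: "s!i < s!l \<and> s!j < s!l"
    have "s!i \<noteq> s!j"
      using assms ijl by (simp add: nth_eq_iff_index_eq)
    then consider "s!i < s!j" | "s!j < s!i" by linarith
    then show False
    proof cases
      case 1
      then have "contains_pattern s [1,2,3]"
        unfolding contains_pattern_length3_iff using ijl smaller
        by (intro exI[of _ i] exI[of _ j] exI[of _ l]) simp
      with avoids show False by blast
    next
      case 2
      then have "contains_pattern s [2,1,3]"
        unfolding contains_pattern_length3_iff using ijl smaller
        by (intro exI[of _ i] exI[of _ j] exI[of _ l]) simp
      with avoids show False by blast
    qed
  qed
qed

lemma no_two_smaller_before_append_leftD:
  assumes "no_two_smaller_before (xs @ ys)"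
  shows "no_two_smaller_before ys"
  unfolding no_two_smaller_before_def
proof (intro allI impI)
  fix i j l assume "i < j \<and> j < l \<and> l < length ys"
  then show "\<not> (ys!i < ys!l \<and> ys!j < ys!l)"
    using assms[unfolded no_two_smaller_before_def, rule_format, of "length xs + i" "length xs + j" "length xs + l"]
    by simp
qed

lemma no_two_smaller_before_append:
  assumes "no_two_smaller_before xs" "no_two_smaller_before ys"
    and below: "\<forall>x\<in>set xs. \<forall>y\<in>set ys. y < x"
  shows "no_two_smaller_before (xs @ ys)"
  unfolding no_two_smaller_before_def
proof (intro allI impI notI)
  fix i j l
  let ?s = "xs @ ys" and ?m = "length xs"
  assume ijl: "i < j \<and> j < l \<and> l < length ?s" and smaller: "?s!i < ?s!l \<and> ?s!j < ?s!l"
  show False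
  proof (cases "l < ?m")
    case True
    then show False
      using assms(1) ijl smaller unfolding no_two_smaller_before_def by (auto simp: nth_append)
  next
    case False
    have "?m \<le> i"
    proof (rule ccontr)
      assume "\<not> ?m \<le> i"
      moreover have "ys ! (l - ?m) \<in> set ys"
        using False ijl by (intro nth_mem) (simp, linarith)
      ultimately have "?s!l < ?s!i"
        using below False by (simp add: nth_append)
      with smaller show False by simp
    qed
    then have "i - ?m < j - ?m \<and> j - ?m < l - ?m \<and> l - ?m < length ys"
      using ijl by auto
    with assms(2) have "\<not> (ys!(i - ?m) < ys!(l - ?m) \<and> ys!(j - ?m) < ys!(l - ?m))"
      unfolding no_two_smaller_before_def by blast
    then show False
      using smaller ijl \<open>?m \<le> i\<close> by (simp add: nth_append)
  qed
qed

lemma no_two_smaller_before_Cons_decreasing: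
  assumes "sorted_wrt (>) xs"
  shows "no_two_smaller_before (a # xs)"
  unfolding no_two_smaller_before_def
proof (intro allI impI)
  fix i j l assume "i < j \<and> j < l \<and> l < length (a # xs)"
  then obtain j' l' where "j = Suc j'" "l = Suc l'" and "j' < l'" "l' < length xs"
    by (cases j; cases l) auto
  with sorted_wrt_nth_less[OF assms \<open>j' < l'\<close> \<open>l' < length xs\<close>]
  have "(a # xs) ! l < (a # xs) ! j"
    by simp
  then show "\<not> ((a # xs) ! i < (a # xs) ! l \<and> (a # xs) ! j < (a # xs) ! l)"
    by simp
qed

lemma no_two_smaller_before_Cons_larger_decreasing:
  assumes "no_two_smaller_before (a # rest)" "distinct (a # rest)"
    and "p < q" "q < length rest" "a < rest ! q"
  shows "rest ! q < rest ! p"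
proof -
  have "\<not> ((a # rest) ! 0 < (a # rest) ! Suc q \<and> (a # rest) ! Suc p < (a # rest) ! Suc q)"
    using assms(1,3,4) unfolding no_two_smaller_before_def by (metis Suc_less_eq length_Cons zero_less_Suc)
  moreover have "rest ! q \<noteq> rest ! p"
    using assms(2-4) by (simp add: nth_eq_iff_index_eq)
  ultimately show ?thesis
    using assms(5) by auto
qed

lemma no_two_smaller_before_Cons_dropWhile_less:
  assumes "no_two_smaller_before (a # rest)" "distinct (a # rest)"
    and "x \<in> set (dropWhile ((<) a) rest)"
  shows "x < a"
proof -
  let ?m = "length (takeWhile ((<) a) rest)"
  obtain i where i: "?m + i < length rest" "x = rest ! (?m + i)"
    using assms(3) by (metis in_set_conv_nth length_append nat_add_left_cancel_less nth_append_length_plus takeWhile_dropWhile_id)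
  have first: "\<not> a < rest ! ?m"
    using i(1) by (metis add_lessD1 nth_length_takeWhile)
  have "\<not> a < x"
  proof
    assume "a < x"
    with first i have "i \<noteq> 0" by (metis add_0_right)
    with assms(1,2) i \<open>a < x\<close> have "x < rest ! ?m"
      using no_two_smaller_before_Cons_larger_decreasing[of a rest ?m "?m + i"] by simp
    with first \<open>a < x\<close> show False by simp
  qed
  moreover have "x \<noteq> a"
    using assms(2,3) set_dropWhileD by fastforce
  ultimately show ?thesis by simp
qed

lemma no_two_smaller_before_Cons_takeWhile_decreasing:
  assumes "no_two_smaller_before (a # rest)" "distinct (a # rest)"
  shows "sorted_wrt (>) (takeWhile ((<) a) rest)"
  unfolding sorted_wrt_iff_nth_less
proof (intro allI impI)
  fix p q assume "p < q" and q: "q < length (takeWhile ((<) a) rest)"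
  moreover have "a < rest ! q"
    using set_takeWhileD[OF nth_mem[OF q]] takeWhile_nth[OF q] by simp
  ultimately show "takeWhile ((<) a) rest ! q < takeWhile ((<) a) rest ! p"
    using no_two_smaller_before_Cons_larger_decreasing[OF assms, of p q] length_takeWhile_le[of "(<) a" rest]
    by (simp add: takeWhile_nth)
qed

section \<open>The decomposition a, n, n-1, ..., a+1, \<tau>\<close>

definition desc_run :: "nat \<Rightarrow> nat \<Rightarrow> nat list" where
  "desc_run a n = rev [Suc a..<Suc n]"

lemma length_desc_run [simp]: "length (desc_run a n) = n - a"
  by (simp add: desc_run_def del: upt_Suc)

lemma set_desc_run [simp]: "set (desc_run a n) = {Suc a..n}"
  by (auto simp: desc_run_def)

lemma distinct_desc_run [simp]: "distinct (desc_run a n)"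
  by (simp add: desc_run_def del: upt_Suc)

lemma sorted_desc_run: "sorted_wrt (>) (desc_run a n)"
  by (simp add: desc_run_def sorted_wrt_rev del: upt_Suc)

lemma nth_desc_run: "p < n - a \<Longrightarrow> desc_run a n ! p = n - p"
  by (simp add: desc_run_def rev_nth del: upt_Suc)

lemma Cons_desc_run_in_perms_iff:
  assumes "1 \<le> a" "a \<le> n"
  shows "a # desc_run a n @ t \<in> perms n \<longleftrightarrow> t \<in> perms (a - 1)"
proof
  assume "a # desc_run a n @ t \<in> perms n"
  then have distinct: "distinct (a # desc_run a n @ t)"
    and "insert a ({Suc a..n} \<union> set t) = {1..n}"
    by (auto simp: perms_def)
  then have "set t = {1..n} - insert a {Suc a..n}"
    by auto
  also have "\<dots> = {1..a - 1}"
    using assms by auto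
  finally show "t \<in> perms (a - 1)"
    using distinct by (simp add: perms_def)
next
  assume "t \<in> perms (a - 1)"
  then show "a # desc_run a n @ t \<in> perms n"
    using assms by (auto simp: perms_def)
qed

lemma perms_Cons_no_two_smaller_before_split:
  assumes "a # rest \<in> perms n" and pattern: "no_two_smaller_before (a # rest)"
  obtains t where "rest = desc_run a n @ t" "t \<in> perms (a - 1)"
proof -
  define L1 where "L1 = takeWhile ((<) a) rest"
  define L2 where "L2 = dropWhile ((<) a) rest"
  have rest: "rest = L1 @ L2"
    by (simp add: L1_def L2_def)
  have distinct: "distinct (a # rest)" and set_eq: "set (a # rest) = {1..n}"
    using assms(1) by (auto simp: perms_def)
  have larger: "\<forall>x\<in>set L1. a < x"
    unfolding L1_def by (auto dest: set_takeWhileD)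
  have smaller: "\<forall>x\<in>set L2. x < a"
    unfolding L2_def using no_two_smaller_before_Cons_dropWhile_less[OF pattern distinct] by blast
  have "a \<notin> set L1 \<union> set L2"
    using distinct by (simp add: rest)
  then have union: "set L1 \<union> set L2 = {1..n} - {a}"
    using set_eq by (metis Diff_insert_absorb list.set(2) rest set_append)
  have "1 \<le> a" "a \<le> n"
    using set_eq by auto
  have "set L1 = (set L1 \<union> set L2) \<inter> {x. a < x}"
    using larger smaller less_asym by blast
  also have "\<dots> = {Suc a..n}"
    unfolding union by auto
  finally have set_L1: "set L1 = {Suc a..n}" .
  have "sorted_wrt (>) L1"
    unfolding L1_def using pattern distinct by (rule no_two_smaller_before_Cons_takeWhile_decreasing)
  then have "rev L1 = [Suc a..<Suc n]"
    using distinct set_L1 unfolding rest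
    by (intro sorted_distinct_set_unique)
      (auto simp: sorted_wrt_rev simp del: upt_Suc elim: sorted_wrt_mono_rel[rotated])
  then have "L1 = desc_run a n"
    unfolding desc_run_def by (metis rev_rev_ident)
  moreover from this have "L2 \<in> perms (a - 1)"
    using assms(1) Cons_desc_run_in_perms_iff[OF \<open>1 \<le> a\<close> \<open>a \<le> n\<close>] by (simp add: rest)
  ultimately show thesis
    using that rest by blast
qed

lemma length_pat_k [simp]: "length (pat_k k) = k + 1"
  by (simp add: pat_k_def del: upt_Suc)

lemma nth_pat_k: "j \<le> k \<Longrightarrow> pat_k k ! j = (if j = 0 then 1 else k + 2 - j)"
  by (cases j) (auto simp: pat_k_def rev_nth simp del: upt_Suc)

lemma nth_Cons_desc_run_append_ge:
  assumes "a \<le> n" "p \<le> n - a"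
  shows "a \<le> (a # desc_run a n @ t) ! p"
proof (cases p)
  case (Suc q)
  with assms show ?thesis by (simp add: nth_append nth_desc_run)
qed simp

lemma nth_Cons_desc_run_append_less:
  assumes "\<forall>x\<in>set t. x < a" "n - a < p" "p < length (a # desc_run a n @ t)"
  shows "(a # desc_run a n @ t) ! p < a"
proof -
  obtain q where "p = Suc q" "n - a \<le> q"
    using assms(2) by (cases p) auto
  with assms show ?thesis by (simp add: nth_append)
qed

lemma occurs_at_pat_k_Cons_desc_run:
  assumes "k \<le> n - a"
  shows "occurs_at (a # desc_run a n @ t) (pat_k k) [0..<k+1]"
proof -
  let ?s = "a # desc_run a n @ t"
  have "?s ! j = (if j = 0 then a else n + 1 - j)" if "j \<le> k" for j
    using assms that by (cases j) (auto simp: nth_append nth_desc_run)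
  then show ?thesis
    using assms by (auto simp: occurs_at_def nth_pat_k simp del: upt_Suc)
qed

lemma occurs_at_pat_k_start_in_run:
  assumes "a \<le> n" "\<forall>x\<in>set t. x < a"
    and occ: "occurs_at (a # desc_run a n @ t) (pat_k k) is" and start: "is ! 0 \<le> n - a"
  shows "k \<le> n - a"
proof (cases "k = 0")
  case False
  let ?s = "a # desc_run a n @ t"
  have len: "length is = k + 1" and sorted: "sorted_wrt (<) is"
    and bound: "\<forall>i\<in>set is. i < length ?s"
    and order: "\<forall>j<k+1. \<forall>l<k+1. (?s ! (is ! j) < ?s ! (is ! l)) \<longleftrightarrow> (pat_k k ! j < pat_k k ! l)"
    using occ unfolding occurs_at_def by simp_all
  have "?s ! (is ! 0) < ?s ! (is ! k)"
    using order False by (simp add: nth_pat_k)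
  moreover have "a \<le> ?s ! (is ! 0)"
    using assms(1) start by (rule nth_Cons_desc_run_append_ge)
  \<comment> \<open>entries past the run are below a, hence below the entry playing the role of 1\<close>
  ultimately have "is ! k \<le> n - a"
    using nth_Cons_desc_run_append_less[OF assms(2), of n "is ! k"] bound len
    by (metis leI less_add_one nth_mem order.strict_trans2 order_less_asym)
  moreover have "is ! 0 + k \<le> is ! k"
    using sorted_wrt_less_nth_ge[OF sorted] len by simp
  ultimately show ?thesis by simp
qed simp

lemma contains_pat_k_Cons_desc_run_iff:
  assumes "a \<le> n" and below: "\<forall>x\<in>set t. x < a"
  shows "contains_pattern (a # desc_run a n @ t) (pat_k k) \<longleftrightarrow>
           k \<le> n - a \<or> contains_pattern t (pat_k k)"
proof
  assume "contains_pattern (a # desc_run a n @ t) (pat_k k)"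
  then obtain "is" where occ: "occurs_at ((a # desc_run a n) @ t) (pat_k k) is"
    unfolding contains_pattern_iff_occurs_at by auto
  show "k \<le> n - a \<or> contains_pattern t (pat_k k)"
  proof (cases "is ! 0 \<le> n - a")
    case True
    then show ?thesis
      using occurs_at_pat_k_start_in_run[OF assms] occ by simp
  next
    case False
    have "sorted is"
      using occ by (intro strict_sorted_imp_sorted) (simp add: occurs_at_def)
    then have "\<forall>i\<in>set is. length (a # desc_run a n) \<le> i"
      using False by (fastforce simp: in_set_conv_nth dest: sorted_nth_mono[of _ 0])
    with occ have "occurs_at t (pat_k k) (map (\<lambda>i. i - length (a # desc_run a n)) is)"
      by (rule occurs_at_append_leftD)
    then show ?thesis
      unfolding contains_pattern_iff_occurs_at by blast
  qed
next
  assume "k \<le> n - a \<or> contains_pattern t (pat_k k)"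
  then show "contains_pattern (a # desc_run a n @ t) (pat_k k)"
  proof
    assume "k \<le> n - a"
    then show ?thesis
      unfolding contains_pattern_iff_occurs_at by (blast intro: occurs_at_pat_k_Cons_desc_run)
  next
    assume "contains_pattern t (pat_k k)"
    then show ?thesis
      using contains_pattern_append_left[of t _ "a # desc_run a n"] by simp
  qed
qed

section \<open>Counting\<close>

definition avoiders :: "nat \<Rightarrow> nat \<Rightarrow> nat list set" where
  "avoiders k n = {\<sigma> \<in> perms n. avoids \<sigma> {[1,2,3], [2,1,3], pat_k k}}"

lemma avoiders_iff:
  "\<sigma> \<in> avoiders k n \<longleftrightarrow>
     \<sigma> \<in> perms n \<and> no_two_smaller_before \<sigma> \<and> \<not> contains_pattern \<sigma> (pat_k k)"
  by (auto simp: avoiders_def avoids_def perms_def no_two_smaller_before_iff_avoids_123_213)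

lemma Cons_desc_run_in_avoiders_iff:
  assumes "1 \<le> a" "a \<le> n"
  shows "a # desc_run a n @ t \<in> avoiders k n \<longleftrightarrow> n - a < k \<and> t \<in> avoiders k (a - 1)"
proof (cases "t \<in> perms (a - 1)")
  case True
  then have below: "\<forall>x\<in>set t. x < a"
    using assms(1) by (auto simp: perms_def)
  have "no_two_smaller_before (a # desc_run a n @ t) \<longleftrightarrow> no_two_smaller_before t"
  proof
    show "no_two_smaller_before (a # desc_run a n @ t) \<Longrightarrow> no_two_smaller_before t"
      using no_two_smaller_before_append_leftD[of "a # desc_run a n"] by simp
    show "no_two_smaller_before t \<Longrightarrow> no_two_smaller_before (a # desc_run a n @ t)"
      using no_two_smaller_before_append[of "a # desc_run a n" t]
        no_two_smaller_before_Cons_decreasing[OF sorted_desc_run] below by fastforce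
  qed
  then show ?thesis
    using True assms Cons_desc_run_in_perms_iff contains_pat_k_Cons_desc_run_iff[OF assms(2) below]
    by (auto simp: avoiders_iff)
next
  case False
  then show ?thesis
    using assms Cons_desc_run_in_perms_iff by (auto simp: avoiders_iff)
qed

lemma avoiders_decomposition:
  assumes "1 \<le> n"
  shows "avoiders k n =
    (\<Union>a\<in>{a. 1 \<le> a \<and> a \<le> n \<and> n - a < k}. (\<lambda>t. a # desc_run a n @ t) ` avoiders k (a - 1))"
    (is "_ = ?rhs")
proof
  show "avoiders k n \<subseteq> ?rhs"
  proof
    fix \<sigma> assume \<sigma>: "\<sigma> \<in> avoiders k n"
    then have "\<sigma> \<in> perms n" "no_two_smaller_before \<sigma>"
      by (simp_all add: avoiders_iff)
    moreover have "\<sigma> \<noteq> []"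
      using \<open>\<sigma> \<in> perms n\<close> assms by (auto simp: perms_def)
    ultimately obtain a rest where "\<sigma> = a # rest" "a # rest \<in> perms n" "no_two_smaller_before (a # rest)"
      by (cases \<sigma>) auto
    moreover from this obtain t where "rest = desc_run a n @ t"
      by (auto elim: perms_Cons_no_two_smaller_before_split)
    moreover have "1 \<le> a" "a \<le> n"
      using \<open>a # rest \<in> perms n\<close> by (auto simp: perms_def)
    ultimately show "\<sigma> \<in> ?rhs"
      using \<sigma> Cons_desc_run_in_avoiders_iff by auto
  qed
  show "?rhs \<subseteq> avoiders k n"
    using Cons_desc_run_in_avoiders_iff by auto
qed

lemma finite_perms: "finite (perms n)"
proof (rule finite_subset)
  show "perms n \<subseteq> {xs. set xs \<subseteq> {1..n} \<and> length xs = n}"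
    unfolding perms_def using distinct_card by fastforce
  show "finite {xs. set xs \<subseteq> {1..n} \<and> length xs = n}"
    by (rule finite_lists_length_eq) simp
qed

lemma card_avoiders_recurrence:
  assumes "1 \<le> n"
  shows "card (avoiders k n) = (\<Sum>a | 1 \<le> a \<and> a \<le> n \<and> n - a < k. card (avoiders k (a - 1)))"
  unfolding avoiders_decomposition[OF assms]
proof (subst card_UN_disjoint)
  show "\<forall>a\<in>{a. 1 \<le> a \<and> a \<le> n \<and> n - a < k}. finite ((\<lambda>t. a # desc_run a n @ t) ` avoiders k (a - 1))"
    using finite_perms by (simp add: avoiders_def)
  show "(\<Sum>a | 1 \<le> a \<and> a \<le> n \<and> n - a < k. card ((\<lambda>t. a # desc_run a n @ t) ` avoiders k (a - 1)))
      = (\<Sum>a | 1 \<le> a \<and> a \<le> n \<and> n - a < k. card (avoiders k (a - 1)))"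
    by (intro sum.cong refl card_image inj_onI) simp
qed auto

lemma a_seq_0: "a_seq k 0 = 1"
proof -
  have "avoids [] {[1,2,3], [2,1,3], pat_k k}"
    by (simp add: avoids_def contains_pattern_def pat_k_def)
  then have "{\<sigma> \<in> perms 0. avoids \<sigma> {[1,2,3], [2,1,3], pat_k k}} = {[]}"
    by (auto simp: perms_def)
  then show ?thesis
    by (simp add: a_seq_def)
qed

lemma a_seq_recurrence:
  assumes "1 \<le> n"
  shows "a_seq k n = (\<Sum>j=1..k. if j \<le> n then a_seq k (n - j) else 0)"
proof -
  have "a_seq k n = (\<Sum>a | 1 \<le> a \<and> a \<le> n \<and> n - a < k. a_seq k (a - 1))"
    using card_avoiders_recurrence[OF assms] by (simp add: a_seq_def avoiders_def)
  also have "\<dots> = (\<Sum>j | 1 \<le> j \<and> j \<le> k \<and> j \<le> n. a_seq k (n - j))"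
    by (rule sum.reindex_bij_witness[of _ "\<lambda>j. n + 1 - j" "\<lambda>a. n + 1 - a"]) auto
  also have "\<dots> = (\<Sum>j=1..k. if j \<le> n then a_seq k (n - j) else 0)"
    by (subst sum.inter_filter[symmetric]) (auto intro!: sum.cong)
  finally show ?thesis .
qed

section \<open>The generating function\<close>

lemma one_minus_fps_X_times_sum_powers:
  "(1 - fps_X) * (\<Sum>j=1..k. fps_X ^ j) = (fps_X - fps_X ^ (k + 1) :: 'a::comm_ring_1 fps)"
proof (cases "k = 0")
  case False
  then show ?thesis
    using sum_gp_multiplied[of 1 k "fps_X :: 'a fps"] by simp
qed simp

lemma Abs_fps_k_bonacci:
  fixes f :: "nat \<Rightarrow> 'a::field"
  assumes f0: "f 0 = 1"
    and rec: "\<And>n. 1 \<le> n \<Longrightarrow> f n = (\<Sum>j=1..k. if j \<le> n then f (n - j) else 0)"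
  shows "Abs_fps f = (1 - fps_X) / (1 - 2 * fps_X + fps_X ^ (k + 1))"
proof -
  define Q :: "'a fps" where "Q = 1 - (\<Sum>j=1..k. fps_X ^ j)"
  define D :: "'a fps" where "D = 1 - 2 * fps_X + fps_X ^ (k + 1)"
  have AQ: "Abs_fps f * Q = 1"
  proof (rule fps_ext)
    fix n
    have "fps_nth (Abs_fps f * Q) n = f n - (\<Sum>j=1..k. if n < j then 0 else f (n - j))"
      unfolding Q_def by (simp add: algebra_simps sum_distrib_left fps_sum_nth fps_X_power_mult_right_nth cong: if_cong)
    also have "\<dots> = fps_nth 1 n"
      using f0 rec[of n] by (cases "n = 0") (auto simp: not_less intro!: sum.cong)
    finally show "fps_nth (Abs_fps f * Q) n = fps_nth 1 n" .
  qed
  have "(1 - fps_X) * Q = (1 - fps_X) - (1 - fps_X) * (\<Sum>j=1..k. fps_X ^ j)"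
    unfolding Q_def by (simp add: right_diff_distrib)
  also have "\<dots> = D"
    unfolding D_def one_minus_fps_X_times_sum_powers by (simp add: algebra_simps mult_2)
  finally have QD: "(1 - fps_X) * Q = D" .
  have "Abs_fps f * D = Abs_fps f * Q * (1 - fps_X)"
    by (simp add: QD[symmetric] ac_simps)
  also have "\<dots> = 1 - fps_X"
    by (simp add: AQ)
  finally have AD: "Abs_fps f * D = 1 - fps_X" .
  have "fps_nth D 0 = 1"
    by (simp add: D_def)
  then have "D \<noteq> 0"
    by auto
  then have "Abs_fps f = Abs_fps f * D / D"
    by simp
  also have "\<dots> = (1 - fps_X) / D"
    by (simp add: AD)
  finally show ?thesis
    unfolding D_def .
qed

theorem mainTheorem1:
  fixes k :: nat
  assumes "k \<ge> 1"
  shows "Abs_fps (\<lambda>n. of_nat (a_seq k n) :: real)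
           = (1 - fps_X) / (1 - 2 * fps_X + fps_X ^ (k + 1))"
proof (rule Abs_fps_k_bonacci)
  show "real (a_seq k 0) = 1"
    by (simp add: a_seq_0)
  show "real (a_seq k n) = (\<Sum>j=1..k. if j \<le> n then real (a_seq k (n - j)) else 0)" if "1 \<le> n" for n
    using a_seq_recurrence[OF that] by (simp add: of_nat_sum if_distrib[of real] cong: if_cong)
qed

end
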